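(* Let $\phi$ be an instance of MonLinNAE3SAT, and let $\mathcal{G}$ be the lifetime-1 temporal graph constructed from $\phi$, with sources $s$ and $s'$. If $\mathcal{G}$ admits a solution of \textsc{ReachFast} with sources $\{s,s'\}$ of value at most $6$, then $\phi$ has a not-all-equal satisfying assignment.
   Context: MonLinNAE3SAT instance: a CNF formula $\phi$ on variables $x_1,\dots,x_n$ with clauses $c_1,\dots,c_m$. Every clause has exactly three distinct literals, every variable appears exactly four times, there are no negations, and any two clauses share at most one variable. A not-all-equal satisfying assignment makes, in every clause, at least one literal true and at least one literal false. Construction of $\mathcal{G}$. All edges have the single label $1$. The vertices and edges are as follows. - Sources $s,s'$. - For each clause $c_j$: vertices $a_j,a'_j,z_j,z'_j$ and edges $sa_j$, $s'a'_j$, $a_jz_j$, $a'_jz'_j$. - For each variable $x_i$: vertices $b_i,b'_i,w_i$ and edges $b_iw_i$, $w_ib'_i$. - If $x_i$ appears in $c_j$: edges $a_jb_i$ and $a'_jb'_i$. - If $x_i$ and $x_k$ appear in a common clause: edges $b_ib_k$, $b'_ib'_k$, $w_iw_k$. - A ladder on vertices $p_1,\dots,p_5,q_1,\dots,q_5$ with edges $sp_1$, $sq_1$, $s'p_5$, $s'q_5$, $p_ip_{i+1}$ and $q_iq_{i+1}$ for $i\in[4]$, and $p_iq_i$ for $i\in[5]$. Temporal graph notions. A temporal graph has edge sets $E_1,\dots,E_{t_{\max}}$, and an edge has label $i$ if it lies in $E_i$. A temporal path uses edges with strictly increasing labels; its arrival time is its last label. $\mathrm{reachtime}(v,\cdot)$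 is the least $t$ such that $v$ reaches every vertex by time $t$. Delaying a label $i$ by a positive integer $\delta$ replaces it by $i+\delta$. A solution for sources $S$ is a temporal graph obtained by delaying labels in which every source reaches every vertex; its value is $\max_{v\in S}\mathrm{reachtime}(v,\cdot)$. *)

theory Defs
  imports Main
begin

text \<open>A MonLinNAE3SAT instance: variables x_0..x_(n-1), clauses c_0..c_(m-1),
  clause j given as the set C j of (indices of) its three variables (all positive).\<close>

definition MonLinNAE3SAT :: "nat \<Rightarrow> nat \<Rightarrow> (nat \<Rightarrow> nat set) \<Rightarrow> bool" where
  "MonLinNAE3SAT n m C \<longleftrightarrow>
     (\<forall>j<m. C j \<subseteq> {..<n} \<and> card (C j) = 3) \<and>
     (\<forall>i<n. card {j. j < m \<and> i \<in> C j} = 4) \<and>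
     (\<forall>j<m. \<forall>k<m. j \<noteq> k \<longrightarrow> card (C j \<inter> C k) \<le> 1)"

definition NAE_satisfiable :: "nat \<Rightarrow> (nat \<Rightarrow> nat set) \<Rightarrow> bool" where
  "NAE_satisfiable m C \<longleftrightarrow>
     (\<exists>\<sigma> :: nat \<Rightarrow> bool. \<forall>j<m. (\<exists>i\<in>C j. \<sigma> i) \<and> (\<exists>i\<in>C j. \<not> \<sigma> i))"

datatype vertex = Src | Src' | A nat | A' nat | Z nat | Z' nat
  | B nat | B' nat | W nat | P nat | Q nat

definition GV :: "nat \<Rightarrow> nat \<Rightarrow> vertex set" where
  "GV n m = {Src, Src'} \<union> (\<Union>j\<in>{..<m}. {A j, A' j, Z j, Z' j})
     \<union> (\<Union>i\<in>{..<n}. {B i, B' i, W i}) \<union> (\<Union>k\<in>{1..5}. {P k, Q k})"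

definition GE :: "nat \<Rightarrow> nat \<Rightarrow> (nat \<Rightarrow> nat set) \<Rightarrow> vertex set set" where
  "GE n m C =
     (\<Union>j\<in>{..<m}. {{Src, A j}, {Src', A' j}, {A j, Z j}, {A' j, Z' j}})
   \<union> (\<Union>i\<in>{..<n}. {{B i, W i}, {W i, B' i}})
   \<union> {{A j, B i} | i j. i < n \<and> j < m \<and> i \<in> C j}
   \<union> {{A' j, B' i} | i j. i < n \<and> j < m \<and> i \<in> C j}
   \<union> (\<Union>{{{B i, B k}, {B' i, B' k}, {W i, W k}} | i k.
        i < n \<and> k < n \<and> i \<noteq> k \<and> (\<exists>j<m. i \<in> C j \<and> k \<in> C j)})
   \<union> {{Src, P 1}, {Src, Q 1}, {Src', P 5}, {Src', Q 5}}
   \<union> (\<Union>k\<in>{1..4}. {{P k, P (Suc k)}, {Q k, Q (Suc k)}})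
   \<union> (\<Union>k\<in>{1..5}. {{P k, Q k}})"

definition tpath :: "vertex set set \<Rightarrow> (vertex set \<Rightarrow> nat) \<Rightarrow> vertex list \<Rightarrow> bool" where
  "tpath Es lam vs \<longleftrightarrow> vs \<noteq> [] \<and> distinct vs \<and>
     (\<forall>i. Suc i < length vs \<longrightarrow> {vs ! i, vs ! Suc i} \<in> Es) \<and>
     (\<forall>i. Suc (Suc i) < length vs \<longrightarrow>
        lam {vs ! i, vs ! Suc i} < lam {vs ! Suc i, vs ! Suc (Suc i)})"

definition arrival :: "(vertex set \<Rightarrow> nat) \<Rightarrow> vertex list \<Rightarrow> nat" where
  "arrival lam vs = (if length vs < 2 then 0
      else lam {vs ! (length vs - 2), vs ! (length vs - 1)})"

definition reaches_by :: "vertex set set \<Rightarrow> (vertex set \<Rightarrow> nat) \<Rightarrow> vertex \<Rightarrow> vertex \<Rightarrow> nat \<Rightarrow> bool" where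
  "reaches_by Es lam u v t \<longleftrightarrow>
     (\<exists>vs. tpath Es lam vs \<and> hd vs = u \<and> last vs = v \<and> arrival lam vs \<le> t)"

definition reachtime :: "vertex set \<Rightarrow> vertex set set \<Rightarrow> (vertex set \<Rightarrow> nat) \<Rightarrow> vertex \<Rightarrow> nat" where
  "reachtime V Es lam u = (LEAST t. \<forall>v\<in>V. reaches_by Es lam u v t)"

text \<open>A solution for sources Srcs of the lifetime-1 graph: every edge label 1 is kept or
  delayed by a positive integer, i.e. the new label is any lam e \<ge> 1; every source reaches
  every vertex.\<close>
definition is_solution :: "vertex set \<Rightarrow> vertex set set \<Rightarrow> vertex set \<Rightarrow> (vertex set \<Rightarrow> nat) \<Rightarrow> bool" where
  "is_solution V Es Srcs lam \<longleftrightarrow> (\<forall>e\<in>Es. 1 \<le> lam e) \<and>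
     (\<forall>u\<in>Srcs. \<forall>v\<in>V. \<exists>t. reaches_by Es lam u v t)"

definition sol_value :: "vertex set \<Rightarrow> vertex set set \<Rightarrow> vertex set \<Rightarrow> (vertex set \<Rightarrow> nat) \<Rightarrow> nat" where
  "sol_value V Es Srcs lam = Max (reachtime V Es lam ` Srcs)"

end

theory Submission imports Defs begin

text \<open>Let \<open>d\<close> be the graph distance from \<open>s\<close>. Since \<open>d(z'_j) = 6\<close> and labels are positive and
  strictly increasing along a temporal path, a path from \<open>s\<close> to \<open>z'_j\<close> arriving by time 6 is
  tight: its \<open>k\<close>-th vertex is at distance \<open>k\<close> and its \<open>k\<close>-th edge has label \<open>k\<close>. The only such
  paths run \<open>s, a_k, b_i, w_i, b'_i, a'_j, z'_j\<close> with \<open>x_i \<in> c_j\<close>, so the edge \<open>b_i w_i\<close> has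
  label 3. Symmetrically, a path from \<open>s'\<close> to \<open>z_j\<close> gives some \<open>x_i \<in> c_j\<close> whose edge \<open>b_i w_i\<close>
  has label 4. Setting \<open>x_i\<close> true iff \<open>b_i w_i\<close> has label 3 is therefore a not-all-equal
  assignment.\<close>

definition edge_lipschitz :: "vertex set set \<Rightarrow> (vertex \<Rightarrow> nat) \<Rightarrow> bool" where
  "edge_lipschitz Es d \<longleftrightarrow> (\<forall>e\<in>Es. \<forall>x\<in>e. \<forall>y\<in>e. d y \<le> d x + 1)"

lemma edge_lipschitzD: "edge_lipschitz Es d \<Longrightarrow> {x, y} \<in> Es \<Longrightarrow> d y \<le> d x + 1"
  unfolding edge_lipschitz_def by (drule bspec) auto

lemma tpath_edge: "tpath Es lam vs \<Longrightarrow> Suc k < length vs \<Longrightarrow> {vs ! k, vs ! Suc k} \<in> Es"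
  unfolding tpath_def by simp

lemma tpath_label_less:
  "tpath Es lam vs \<Longrightarrow> Suc (Suc k) < length vs \<Longrightarrow>
    lam {vs ! k, vs ! Suc k} < lam {vs ! Suc k, vs ! Suc (Suc k)}"
  unfolding tpath_def by simp

lemma tpath_potential_le:
  fixes d :: "vertex \<Rightarrow> nat"
  assumes "tpath Es lam vs"
    and lip: "edge_lipschitz Es d"
    and "i \<le> j" "j < length vs"
  shows "d (vs ! j) \<le> d (vs ! i) + (j - i)"
  using assms(3,4)
proof (induction j)
  case (Suc j)
  have step: "d (vs ! Suc j) \<le> d (vs ! j) + 1"
    using edge_lipschitzD[OF lip tpath_edge[OF assms(1)]] Suc.prems by simp
  show ?case
  proof (cases "i = Suc j")
    case False
    with Suc have "d (vs ! j) \<le> d (vs ! i) + (j - i)" by simp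
    with step False Suc.prems show ?thesis by arith
  qed simp
qed simp

lemma tpath_labels_increasing:
  assumes "tpath Es lam vs" "i \<le> j" "Suc j < length vs"
  shows "lam {vs ! i, vs ! Suc i} + (j - i) \<le> lam {vs ! j, vs ! Suc j}"
  using assms(2,3)
proof (induction j)
  case (Suc j)
  have step: "lam {vs ! j, vs ! Suc j} < lam {vs ! Suc j, vs ! Suc (Suc j)}"
    using tpath_label_less[OF assms(1)] Suc.prems by simp
  show ?case
  proof (cases "i = Suc j")
    case False
    with Suc have "lam {vs ! i, vs ! Suc i} + (j - i) \<le> lam {vs ! j, vs ! Suc j}" by simp
    with step False Suc.prems show ?thesis by arith
  qed simp
qed simp

lemma tpath_length_le_arrival:
  assumes "tpath Es lam vs" and pos: "\<forall>e\<in>Es. 1 \<le> lam e"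
  shows "length vs - 1 \<le> arrival lam vs"
proof (cases "length vs < 2")
  case False
  have "1 \<le> lam {vs ! 0, vs ! Suc 0}" using pos tpath_edge[OF assms(1), of 0] False by simp
  moreover have "lam {vs ! 0, vs ! Suc 0} + (length vs - 2) \<le> arrival lam vs"
    using tpath_labels_increasing[OF assms(1), where i = 0 and j = "length vs - 2"] False
    by (simp add: arrival_def Suc_diff_Suc numeral_2_eq_2)
  ultimately show ?thesis using False by linarith
qed (simp add: arrival_def)

lemma tpath_tight:
  fixes d :: "vertex \<Rightarrow> nat"
  assumes tp: "tpath Es lam vs" and pos: "\<forall>e\<in>Es. 1 \<le> lam e"
    and lip: "edge_lipschitz Es d"
    and hd: "d (hd vs) = 0" and last: "d (last vs) = t" and arr: "arrival lam vs \<le> t"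
  shows "length vs = Suc t" "\<And>k. k \<le> t \<Longrightarrow> d (vs ! k) = k"
    "\<And>k. k < t \<Longrightarrow> lam {vs ! k, vs ! Suc k} = Suc k"
proof -
  have ne: "vs \<noteq> []" using tp unfolding tpath_def by simp
  then have d0: "d (vs ! 0) = 0" and dL: "d (vs ! (length vs - 1)) = t"
    using hd last by (simp_all add: hd_conv_nth last_conv_nth)
  have up: "k < length vs \<Longrightarrow> d (vs ! k) \<le> k" for k
    using tpath_potential_le[OF tp lip, where i = 0 and j = k] d0 by simp
  have "t \<le> length vs - 1" using up[of "length vs - 1"] dL ne by simp
  moreover have "length vs - 1 \<le> t" using tpath_length_le_arrival[OF tp pos] arr by simp
  ultimately show len: "length vs = Suc t" using ne by (cases vs) auto
  show "d (vs ! k) = k" if "k \<le> t" for k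
    using tpath_potential_le[OF tp lip, where i = k and j = t] up[of k] dL len that by simp
  show "lam {vs ! k, vs ! Suc k} = Suc k" if "k < t" for k
  proof -
    have "1 \<le> lam {vs ! 0, vs ! Suc 0}" using pos tpath_edge[OF tp, of 0] len that by simp
    moreover have "lam {vs ! 0, vs ! Suc 0} + k \<le> lam {vs ! k, vs ! Suc k}"
      using tpath_labels_increasing[OF tp, where i = 0 and j = k] len that by simp
    moreover have "lam {vs ! k, vs ! Suc k} + (t - 1 - k) \<le> lam {vs ! (t - 1), vs ! t}"
      using tpath_labels_increasing[OF tp, where i = k and j = "t - 1"] len that by simp
    moreover have "lam {vs ! (t - 1), vs ! t} \<le> t"
      using arr len that by (simp add: arrival_def)
    ultimately show ?thesis using that by linarith
  qed
qed

lemma reaches_by_mono: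
  "reaches_by Es lam u v t \<Longrightarrow> t \<le> t' \<Longrightarrow> reaches_by Es lam u v t'"
  unfolding reaches_by_def by fastforce

lemma reaches_by_reachtime:
  assumes "finite V" "\<forall>v\<in>V. \<exists>t. reaches_by Es lam u v t" "v \<in> V"
  shows "reaches_by Es lam u v (reachtime V Es lam u)"
proof -
  obtain f where f: "\<forall>w\<in>V. reaches_by Es lam u w (f w)" using assms(2) by metis
  have "\<forall>w\<in>V. reaches_by Es lam u w (sum f V)"
    using f reaches_by_mono member_le_sum[OF _ _ assms(1), of _ f] by blast
  then have "\<exists>t. \<forall>w\<in>V. reaches_by Es lam u w t" by blast
  then have "\<forall>w\<in>V. reaches_by Es lam u w (reachtime V Es lam u)"
    unfolding reachtime_def by (rule LeastI_ex)
  with assms(3) show ?thesis by blast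
qed

lemma reaches_by_sol_value:
  assumes "is_solution V Es Srcs lam" "sol_value V Es Srcs lam \<le> t"
    "finite V" "finite Srcs" "u \<in> Srcs" "v \<in> V"
  shows "reaches_by Es lam u v t"
proof -
  have "reaches_by Es lam u v (reachtime V Es lam u)"
    using assms(1,3,5,6) unfolding is_solution_def by (blast intro: reaches_by_reachtime)
  moreover have "reachtime V Es lam u \<le> sol_value V Es Srcs lam"
    unfolding sol_value_def using assms(4,5) by simp
  with assms(2) have "reachtime V Es lam u \<le> t" by (rule order_trans[rotated])
  ultimately show ?thesis by (rule reaches_by_mono)
qed

lemma finite_GV: "finite (GV n m)"
  unfolding GV_def by auto

text \<open>Graph distances from \<open>s\<close> and from \<open>s'\<close> (for vertices of the graph); only their
  1-Lipschitz property along edges is used.\<close>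
fun level :: "vertex \<Rightarrow> nat" where
  "level Src = 0" | "level (A _) = 1" | "level (Z _) = 2" | "level (B _) = 2"
| "level (W _) = 3" | "level (B' _) = 4" | "level (A' _) = 5" | "level (Z' _) = 6"
| "level Src' = 6" | "level (P k) = k" | "level (Q k) = k"

fun level' :: "vertex \<Rightarrow> nat" where
  "level' Src' = 0" | "level' (A' _) = 1" | "level' (Z' _) = 2" | "level' (B' _) = 2"
| "level' (W _) = 3" | "level' (B _) = 4" | "level' (A _) = 5" | "level' (Z _) = 6"
| "level' Src = 6" | "level' (P k) = 6 - k" | "level' (Q k) = 6 - k"

lemma edge_lipschitz_level: "edge_lipschitz (GE n m C) level"
  unfolding edge_lipschitz_def by (auto simp: GE_def)

lemma edge_lipschitz_level': "edge_lipschitz (GE n m C) level'"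
  unfolding edge_lipschitz_def by (auto simp: GE_def)

lemma GE_neighbour_Z: "{x, Z j} \<in> GE n m C \<Longrightarrow> x = A j"
  and GE_neighbour_Z': "{x, Z' j} \<in> GE n m C \<Longrightarrow> x = A' j"
  and GE_neighbour_A: "{x, A j} \<in> GE n m C \<Longrightarrow> x = Src \<or> x = Z j \<or> (\<exists>i\<in>C j. x = B i)"
  and GE_neighbour_A': "{x, A' j} \<in> GE n m C \<Longrightarrow> x = Src' \<or> x = Z' j \<or> (\<exists>i\<in>C j. x = B' i)"
  and GE_neighbour_B: "{x, B i} \<in> GE n m C \<Longrightarrow> x = W i \<or> (\<exists>j. x = A j) \<or> (\<exists>k. x = B k)"
  and GE_neighbour_B': "{x, B' i} \<in> GE n m C \<Longrightarrow> x = W i \<or> (\<exists>j. x = A' j) \<or> (\<exists>k. x = B' k)"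
  and GE_neighbour_W: "{x, W i} \<in> GE n m C \<Longrightarrow> x = B i \<or> x = B' i \<or> (\<exists>k. x = W k)"
  unfolding GE_def by (auto simp: doubleton_eq_iff)

lemma tight_path_Src_Z':
  assumes "reaches_by (GE n m C) lam Src (Z' j) 6" "\<forall>e\<in>GE n m C. 1 \<le> lam e"
  shows "\<exists>i\<in>C j. lam {B i, W i} = 3"
proof -
  obtain vs where tp: "tpath (GE n m C) lam vs" and "hd vs = Src" "last vs = Z' j"
    and "arrival lam vs \<le> 6"
    using assms(1) unfolding reaches_by_def by blast
  note tight = tpath_tight[OF tp assms(2) edge_lipschitz_level, where t = 6]
  have len: "length vs = 7" and lv: "\<And>k. k \<le> 6 \<Longrightarrow> level (vs ! k) = k"
    and lab: "\<And>k. k < 6 \<Longrightarrow> lam {vs ! k, vs ! Suc k} = Suc k"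
    using tight \<open>hd vs = Src\<close> \<open>last vs = Z' j\<close> \<open>arrival lam vs \<le> 6\<close> by simp_all
  have edge: "\<And>k. k < 6 \<Longrightarrow> {vs ! k, vs ! Suc k} \<in> GE n m C"
    using tpath_edge[OF tp] len by simp
  have "vs ! 6 = Z' j"
    using \<open>last vs = Z' j\<close> len by (simp add: last_conv_nth flip: length_greater_0_conv)
  \<comment> \<open>walking back from \<open>z'_j\<close>, the level of each vertex leaves a single possible neighbour\<close>
  then have "vs ! 5 = A' j" using edge[of 5] GE_neighbour_Z' by simp
  then obtain i where i: "i \<in> C j" and v4: "vs ! 4 = B' i"
    using edge[of 4] GE_neighbour_A' lv[of 4] by fastforce
  then have v3: "vs ! 3 = W i" using edge[of 3] GE_neighbour_B' lv[of 3] by fastforce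
  then have "vs ! 2 = B i" using edge[of 2] GE_neighbour_W lv[of 2] by fastforce
  with v3 lab[of 2] i show ?thesis by (auto simp: numeral_eq_Suc)
qed

lemma tight_path_Src'_Z:
  assumes "reaches_by (GE n m C) lam Src' (Z j) 6" "\<forall>e\<in>GE n m C. 1 \<le> lam e"
  shows "\<exists>i\<in>C j. lam {B i, W i} = 4"
proof -
  obtain vs where tp: "tpath (GE n m C) lam vs" and "hd vs = Src'" "last vs = Z j"
    and "arrival lam vs \<le> 6"
    using assms(1) unfolding reaches_by_def by blast
  note tight = tpath_tight[OF tp assms(2) edge_lipschitz_level', where t = 6]
  have len: "length vs = 7" and lv: "\<And>k. k \<le> 6 \<Longrightarrow> level' (vs ! k) = k"
    and lab: "\<And>k. k < 6 \<Longrightarrow> lam {vs ! k, vs ! Suc k} = Suc k"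
    using tight \<open>hd vs = Src'\<close> \<open>last vs = Z j\<close> \<open>arrival lam vs \<le> 6\<close> by simp_all
  have edge: "\<And>k. k < 6 \<Longrightarrow> {vs ! k, vs ! Suc k} \<in> GE n m C"
    using tpath_edge[OF tp] len by simp
  have "vs ! 6 = Z j"
    using \<open>last vs = Z j\<close> len by (simp add: last_conv_nth flip: length_greater_0_conv)
  then have "vs ! 5 = A j" using edge[of 5] GE_neighbour_Z by simp
  then obtain i where i: "i \<in> C j" and v4: "vs ! 4 = B i"
    using edge[of 4] GE_neighbour_A lv[of 4] by fastforce
  then have "vs ! 3 = W i" using edge[of 3] GE_neighbour_B lv[of 3] by fastforce
  with v4 lab[of 3] i show ?thesis by (auto simp: numeral_eq_Suc insert_commute)
qed

theorem lemma2:
  fixes n m :: nat and C :: "nat \<Rightarrow> nat set" and lam :: "vertex set \<Rightarrow> nat"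
  assumes "MonLinNAE3SAT n m C"
    and "is_solution (GV n m) (GE n m C) {Src, Src'} lam"
    and "sol_value (GV n m) (GE n m C) {Src, Src'} lam \<le> 6"
  shows "NAE_satisfiable m C"
  unfolding NAE_satisfiable_def
proof (intro exI[of _ "\<lambda>i. lam {B i, W i} = 3"] allI impI conjI)
  fix j assume "j < m"
  then have "Z j \<in> GV n m" "Z' j \<in> GV n m" unfolding GV_def by auto
  have pos: "\<forall>e\<in>GE n m C. 1 \<le> lam e" using assms(2) unfolding is_solution_def by blast
  have "reaches_by (GE n m C) lam Src (Z' j) 6" "reaches_by (GE n m C) lam Src' (Z j) 6"
    using \<open>Z j \<in> GV n m\<close> \<open>Z' j \<in> GV n m\<close>
    by (auto intro: reaches_by_sol_value[OF assms(2,3) finite_GV])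
  then obtain i i' where "i \<in> C j" "lam {B i, W i} = 3" "i' \<in> C j" "lam {B i', W i'} = 4"
    using tight_path_Src_Z'[OF _ pos] tight_path_Src'_Z[OF _ pos] by metis
  then show "\<exists>i\<in>C j. lam {B i, W i} = 3" "\<exists>i\<in>C j. lam {B i, W i} \<noteq> 3"
    by (auto intro: bexI[of _ i'])
qed

end
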